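(* Let $a,c,p\in\mathbb{C}$ with $-c\notin\mathbb{N}\cup\{0\}$. Define sequences $(u_n)_{n\ge0}$ and $(v_n)_{n\ge0}$ by $u_0=1$, $u_1=\frac{a}{c}+p$, $v_0=1$, $v_1=\frac{a}{c}-p$ and, for all integers $n\ge1$, \[ u_{n+1}=\frac{a+p(c+2n)+n}{(n+1)(c+n)}u_n-\frac{p(p+1)}{(n+1)(c+n)}u_{n-1}, \] \[ v_{n+1}=\frac{a-p(c+2n)+n}{(n+1)(c+n)}v_n-\frac{(p-1)p}{(n+1)(c+n)}v_{n-1}. \] Then \[ \sinh(pz)\,M(a,c;z)=\sum_{n=0}^\infty\frac{u_n-v_n}{2}z^n,\qquad z\in\mathbb{C}. \]
   Context: For $a\in\mathbb{C}$, $(a)_n=a(a+1)\cdots(a+n-1)$ denotes the Pochhammer symbol, with $(a)_0=1$. For $a,c\in\mathbb{C}$ with $-c\notin\mathbb{N}\cup\{0\}$, the confluent hypergeometric (Kummer) function is $M(a,c;z)=\sum_{n=0}^\infty \frac{(a)_n}{(c)_n\,n!}z^n$, $z\in\mathbb{C}$. *)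

theory Defs
  imports "HOL-Analysis.Analysis"
begin

definition kummerM :: "complex \<Rightarrow> complex \<Rightarrow> complex \<Rightarrow> complex" where
  "kummerM a c z = (\<Sum>n. pochhammer a n / (pochhammer c n * of_nat (fact n)) * z ^ n)"

fun useq :: "complex \<Rightarrow> complex \<Rightarrow> complex \<Rightarrow> nat \<Rightarrow> complex" where
  "useq a c p 0 = 1"
| "useq a c p (Suc 0) = a / c + p"
| "useq a c p (Suc (Suc m)) =
     (let n = of_nat (Suc m) :: complex in
       (a + p * (c + 2 * n) + n) / ((n + 1) * (c + n)) * useq a c p (Suc m)
       - p * (p + 1) / ((n + 1) * (c + n)) * useq a c p m)"

fun vseq :: "complex \<Rightarrow> complex \<Rightarrow> complex \<Rightarrow> nat \<Rightarrow> complex" where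
  "vseq a c p 0 = 1"
| "vseq a c p (Suc 0) = a / c - p"
| "vseq a c p (Suc (Suc m)) =
     (let n = of_nat (Suc m) :: complex in
       (a - p * (c + 2 * n) + n) / ((n + 1) * (c + n)) * vseq a c p (Suc m)
       - (p - 1) * p / ((n + 1) * (c + n)) * vseq a c p m)"

end

theory Submission
  imports Defs
begin

text \<open>
  The generating function of \<open>u\<close> is \<open>G(z) = exp(pz) M(a,c;z)\<close>. Indeed, Kummer's equation
  \<open>z M'' + (c - z) M' = a M\<close> turns, after multiplication by \<open>exp(pz)\<close>, into
  \<open>z G'' + (c - (2p + 1) z) G' = (pc + a - p(p + 1) z) G\<close>, and comparing the coefficients of
  \<open>z\<^sup>n\<close> in it gives exactly the recurrence defining \<open>u\<close>. The recurrence for \<open>v\<close> is the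
  one for \<open>u\<close> with \<open>p\<close> replaced by \<open>-p\<close>, and \<open>sinh(pz) = (exp(pz) - exp(-pz)) / 2\<close>.
\<close>

lemma of_nat_add_one_neq_0: "(of_nat n + 1 :: 'a :: semiring_char_0) \<noteq> 0"
  by (metis add.commute of_nat_Suc of_nat_neq_0)

definition kummer_fps :: "complex \<Rightarrow> complex \<Rightarrow> complex fps" where
  "kummer_fps a c = Abs_fps (\<lambda>n. pochhammer a n / (pochhammer c n * of_nat (fact n)))"

lemma eval_kummer_fps: "eval_fps (kummer_fps a c) z = kummerM a c z"
  by (simp add: eval_fps_def kummer_fps_def kummerM_def)

text \<open>No hypothesis on \<open>c\<close> is needed: once \<open>pochhammer c (Suc n) = 0\<close>, the convention
  \<open>x / 0 = 0\<close> makes both sides vanish.\<close>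

lemma kummer_fps_nth_Suc:
  "fps_nth (kummer_fps a c) (Suc n) =
     (a + of_nat n) / ((of_nat n + 1) * (c + of_nat n)) * fps_nth (kummer_fps a c) n"
  by (simp add: kummer_fps_def pochhammer_rec' divide_inverse ac_simps)

lemma fps_conv_radius_kummer_fps: "fps_conv_radius (kummer_fps a c) = \<infinity>"
  unfolding fps_conv_radius_def
proof (rule conv_radius_inftyI'')
  fix z :: complex
  define K where "K = fps_nth (kummer_fps a c)"
  define r where "r n = (a + of_nat n) / ((of_nat n + 1) * (c + of_nat n)) * z" for n
  have step: "K (Suc n) * z ^ Suc n = r n * (K n * z ^ n)" for n
    by (simp add: K_def r_def kummer_fps_nth_Suc)
  have r_eq: "r n = z * (1 + (a - 1) / (of_nat n + 1)) / (c + of_nat n)" for n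
    using of_nat_add_one_neq_0[of n, where 'a = complex] by (simp add: r_def field_simps)
  have "(\<lambda>n. z * (1 + (a - 1) / (of_nat n + 1))) \<longlonglongrightarrow> z * (1 + 0)"
    by (intro tendsto_intros tendsto_divide_0[OF tendsto_const]
          tendsto_add_filterlim_at_infinity'[OF tendsto_of_nat tendsto_const])
  then have "r \<longlonglongrightarrow> 0"
    unfolding r_eq
    by (rule tendsto_divide_0)
      (rule tendsto_add_filterlim_at_infinity[OF tendsto_const tendsto_of_nat])
  then have "\<forall>\<^sub>F n in sequentially. norm (r n) < 1/2"
    by (auto dest: tendstoD[of _ _ _ "1/2"])
  then obtain N where N: "\<And>n. n \<ge> N \<Longrightarrow> norm (r n) < 1/2"
    unfolding eventually_sequentially by blast
  show "summable (\<lambda>n. K n * z ^ n)"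
  proof (rule summable_ratio_test[of "1/2" N])
    fix n assume "n \<ge> N"
    have "norm (K (Suc n) * z ^ Suc n) = norm (r n) * norm (K n * z ^ n)"
      by (simp only: step norm_mult)
    also have "\<dots> \<le> 1/2 * norm (K n * z ^ n)"
      using N[OF \<open>n \<ge> N\<close>] by (intro mult_right_mono) auto
    finally show "norm (K (Suc n) * z ^ Suc n) \<le> 1/2 * norm (K n * z ^ n)" .
  qed simp
qed

lemma kummer_fps_ode:
  assumes "c \<notin> \<int>\<^sub>\<le>\<^sub>0"
  shows "fps_X * fps_deriv (fps_deriv (kummer_fps a c))
           + (fps_const c - fps_X) * fps_deriv (kummer_fps a c) = fps_const a * kummer_fps a c"
proof (rule fps_ext)
  fix n
  have "c + of_nat n \<noteq> 0"
    using assms by (auto dest: plus_of_nat_eq_0_imp)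
  then have "(of_nat n + 1) * (c + of_nat n) * fps_nth (kummer_fps a c) (Suc n)
               = (a + of_nat n) * fps_nth (kummer_fps a c) n"
    by (simp add: kummer_fps_nth_Suc of_nat_add_one_neq_0)
  then show "fps_nth (fps_X * fps_deriv (fps_deriv (kummer_fps a c))
                 + (fps_const c - fps_X) * fps_deriv (kummer_fps a c)) n
             = fps_nth (fps_const a * kummer_fps a c) n"
    by (cases n) (simp_all add: algebra_simps)
qed

lemma exp_times_kummer_fps_ode:
  fixes a c p :: complex
  assumes c: "c \<notin> \<int>\<^sub>\<le>\<^sub>0"
  defines "G \<equiv> fps_exp p * kummer_fps a c"
  shows "fps_X * fps_deriv (fps_deriv G)
           + (fps_const c - fps_const (2 * p + 1) * fps_X) * fps_deriv G
           = (fps_const (p * c + a) - fps_const (p * (p + 1)) * fps_X) * G"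
proof -
  define E K where "E = fps_exp p" and "K = kummer_fps a c"
  define P C A where "P = fps_const p" and "C = fps_const c" and "A = fps_const a"
  have dE: "fps_deriv E = P * E"
    by (simp add: E_def P_def)
  have "fps_X * fps_deriv (fps_deriv G) + (C - (2 * P + 1) * fps_X) * fps_deriv G
          = ((P * C + A) - P * (P + 1) * fps_X) * G
            + E * (fps_X * fps_deriv (fps_deriv K) + (C - fps_X) * fps_deriv K - A * K)"
    by (simp add: G_def flip: E_def K_def add: dE algebra_simps) (simp add: P_def)
  also have "fps_X * fps_deriv (fps_deriv K) + (C - fps_X) * fps_deriv K - A * K = 0"
    using kummer_fps_ode[OF c] by (simp add: K_def C_def A_def)
  finally show ?thesis
    by (simp add: P_def C_def A_def numeral_fps_const flip: fps_const_add fps_const_mult)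
qed

lemma useq_eq_exp_times_kummer_fps_nth:
  fixes a c p :: complex
  assumes c: "c \<notin> \<int>\<^sub>\<le>\<^sub>0"
  defines "G \<equiv> fps_exp p * kummer_fps a c"
  shows "useq a c p n = fps_nth G n"
proof -
  define g where "g = fps_nth G"
  note ode =
    exp_times_kummer_fps_ode[OF c, of p a, folded G_def, unfolded fps_eq_iff, rule_format]
  have c_n: "c + of_nat m \<noteq> 0" for m
    using c by (auto dest: plus_of_nat_eq_0_imp)
  have g0: "g 0 = 1"
    by (simp add: g_def G_def kummer_fps_def)
  have g1: "g (Suc 0) = a / c + p"
  proof -
    have "c * g 1 = (p * c + a) * g 0"
      using ode[of 0] by (simp add: g_def algebra_simps)
    then show ?thesis
      using c_n[of 0] g0 by (simp add: field_simps)
  qed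
  have g_rec: "g (Suc (Suc m)) =
     (let n = of_nat (Suc m) in
       (a + p * (c + 2 * n) + n) / ((n + 1) * (c + n)) * g (Suc m)
       - p * (p + 1) / ((n + 1) * (c + n)) * g m)" for m
  proof -
    let ?n = "of_nat (Suc m) :: complex"
    define D where "D = (?n + 1) * (c + ?n)"
    have "D \<noteq> 0"
      using c_n[of "Suc m"] of_nat_add_one_neq_0[of "Suc m"]
      by (simp add: D_def del: of_nat_Suc)
    moreover have "g (Suc (Suc m)) * D
                     = (a + p * (c + 2 * ?n) + ?n) * g (Suc m) - p * (p + 1) * g m"
      using ode[of "Suc m"] by (simp add: D_def g_def algebra_simps)
    ultimately show ?thesis
      unfolding Let_def D_def[symmetric]
      by (simp only: times_divide_eq_left diff_divide_distrib[symmetric] eq_divide_eq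
          not_False_eq_True if_True)
  qed
  show ?thesis
    unfolding g_def[symmetric]
    by (induction n rule: induct_nat_012) (simp_all add: g0 g1 g_rec)
qed

lemma vseq_eq_useq_uminus: "vseq a c p n = useq a c (-p) n"
  by (induction n rule: induct_nat_012) (simp_all add: Let_def algebra_simps)

lemma sums_exp_times_kummerM:
  "(\<lambda>n. fps_nth (fps_exp p * kummer_fps a c) n * z ^ n) sums (exp (p * z) * kummerM a c z)"
proof -
  have "norm z < fps_conv_radius (fps_exp p * kummer_fps a c)"
    using fps_conv_radius_mult[of "fps_exp p" "kummer_fps a c"]
    by (simp add: fps_conv_radius_kummer_fps)
  then have "(\<lambda>n. fps_nth (fps_exp p * kummer_fps a c) n * z ^ n)
               sums eval_fps (fps_exp p * kummer_fps a c) z"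
    by (rule sums_eval_fps)
  also have "eval_fps (fps_exp p * kummer_fps a c) z = exp (p * z) * kummerM a c z"
    by (simp add: eval_fps_mult fps_conv_radius_kummer_fps eval_kummer_fps)
  finally show ?thesis .
qed

theorem theorem2p2:
  fixes a c p z :: complex
  assumes "\<forall>k::nat. c \<noteq> - of_nat k"
  shows "(\<lambda>n. (useq a c p n - vseq a c p n) / 2 * z ^ n) sums (sinh (p * z) * kummerM a c z)"
proof -
  have c: "c \<notin> \<int>\<^sub>\<le>\<^sub>0"
    using assms by (auto elim!: nonpos_Ints_cases')
  let ?g = "\<lambda>q n. fps_nth (fps_exp q * kummer_fps a c) n"
  have "(\<lambda>n. (?g p n * z ^ n - ?g (-p) n * z ^ n) / 2) sums
          ((exp (p * z) * kummerM a c z - exp (-p * z) * kummerM a c z) / 2)"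
    by (intro sums_divide sums_diff sums_exp_times_kummerM)
  then show ?thesis
    by (simp add: useq_eq_exp_times_kummer_fps_nth[OF c] vseq_eq_useq_uminus sinh_field_def
        left_diff_distrib)
qed

end
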